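(* Let $R$ be a rational function with zero set $Z$ and pole set $P_R$. If $\mathcal S_1$ and $\mathcal S_2$ are two tube-log Riemann surfaces associated to the primitive $\int R(z)\,dz$, then $\mathcal S_1=\mathcal S_2$ as tube-log Riemann surfaces.
   Context: A tube-log Riemann surface is a Riemann surface $\mathcal S$ with a distinguished atlas of charts whose transition maps are translations, which is the closure of a disjoint union of open pieces each biholomorphic, with derivative identically $1$ in distinguished charts, to a slit building block (a complex plane, complex cylinder $\mathbb C/2\pi i\lambda\mathbb Z$, half-cylinder, log-polygon or quotiented log-polygon, minus a locally finite disjoint union of closed segments or half-lines), these maps extending injectively to the metric completions minus discrete sets. Because transition maps are translations, a holomorphic map into $\mathcal S$ has a well-defined derivative computed in distinguished charts. Two tube-log Riemann surfaces $\mathcal S_1,\mathcal S_2$ are equal if there is a biholomorphism $\psi:\mathcal S_1\to\mathcal S_2$ whose derivative in the distinguished charts is identically $1$. A tube-log Riemann surface $\mathcal S$ is associated to $\int R(z)\,dz$ if there is a biholomorphism $F:\overline{\mathbb C}-(Z\cup P_R)\to\mathcal S$ whose derivative in distinguished charts satisfies $F'(z)=R(z)$. *)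

theory Defs
  imports "HOL-Complex_Analysis.Complex_Analysis" "HOL-Computational_Algebra.Polynomial"
begin

definition translation_surface :: "'a topology \<Rightarrow> ('a set \<times> ('a \<Rightarrow> complex)) set \<Rightarrow> bool" where
  "translation_surface X A \<longleftrightarrow>
     Hausdorff_space X \<and> connected_space X \<and>
     (\<forall>(U, \<phi>) \<in> A. openin X U \<and> open (\<phi> ` U) \<and>
         homeomorphic_map (subtopology X U) (top_of_set (\<phi> ` U)) \<phi>) \<and>
     (\<forall>x \<in> topspace X. \<exists>(U, \<phi>) \<in> A. x \<in> U) \<and>
     (\<forall>(U, \<phi>) \<in> A. \<forall>(V, \<eta>) \<in> A. \<forall>x \<in> U \<inter> V.
         \<exists>W c. openin X W \<and> x \<in> W \<and> W \<subseteq> U \<inter> V \<and> (\<forall>y \<in> W. \<eta> y = \<phi> y + c))"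

definition surface_equal ::
  "'a topology \<Rightarrow> ('a set \<times> ('a \<Rightarrow> complex)) set \<Rightarrow>
   'b topology \<Rightarrow> ('b set \<times> ('b \<Rightarrow> complex)) set \<Rightarrow> bool" where
  "surface_equal X1 A1 X2 A2 \<longleftrightarrow>
     (\<exists>\<psi>. homeomorphic_map X1 X2 \<psi> \<and>
        (\<forall>(U, \<phi>) \<in> A1. \<forall>(V, \<eta>) \<in> A2. \<forall>x \<in> U. \<psi> x \<in> V \<longrightarrow>
           ((\<lambda>w. \<eta> (\<psi> (inv_into U \<phi> w))) has_field_derivative 1) (at (\<phi> x))))"

definition rat_fun :: "complex poly \<Rightarrow> complex poly \<Rightarrow> complex \<Rightarrow> complex" where
  "rat_fun p q z = poly p z / poly q z"

definition zero_set :: "complex poly \<Rightarrow> complex set" where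
  "zero_set p = {z. poly p z = 0}"

definition pole_set :: "complex poly \<Rightarrow> complex set" where
  "pole_set q = {z. poly q z = 0}"

text \<open>A surface is associated to the primitive of R(z) dz if there is a biholomorphism
  F from the sphere minus zeros and poles (the point at infinity being always a zero or
  pole of R(z) dz) onto it with derivative R in distinguished charts.\<close>

definition associated_to ::
  "complex poly \<Rightarrow> complex poly \<Rightarrow> 'a topology \<Rightarrow> ('a set \<times> ('a \<Rightarrow> complex)) set \<Rightarrow> bool" where
  "associated_to p q X A \<longleftrightarrow>
     (let \<Omega> = - (zero_set p \<union> pole_set q) in
      \<exists>F. homeomorphic_map (top_of_set \<Omega>) X F \<and>
        (\<forall>z \<in> \<Omega>. \<forall>(U, \<phi>) \<in> A. F z \<in> U \<longrightarrow>
           ((\<phi> \<circ> F) has_field_derivative rat_fun p q z) (at z)))"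

end

theory Submission
  imports Defs
begin

text \<open>Both surfaces are parametrised by the same domain \<Omega>, the plane minus the zeros and
  poles of R, through maps F1, F2 that are primitives of R in distinguished charts. Hence
  \<psi> = F2 \<circ> F1\<inverse> is a homeomorphism, and in charts it is (\<eta> \<circ> F2) \<circ> (\<phi> \<circ> F1)\<inverse>; by the chain
  rule and the inverse function rule its derivative is R(z) / R(z) = 1, since R has no
  zeros on \<Omega>.\<close>

lemma closed_zero_set: "closed (zero_set p)"
  unfolding zero_set_def by (intro closed_Collect_eq continuous_intros)

lemma closed_pole_set: "closed (pole_set q)"
  unfolding pole_set_def by (intro closed_Collect_eq continuous_intros)

lemma open_complement_zeros_poles: "open (- (zero_set p \<union> pole_set q))"
  using closed_zero_set closed_pole_set by blast

lemma rat_fun_nonzero_off_zeros_poles: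
  "z \<in> - (zero_set p \<union> pole_set q) \<Longrightarrow> rat_fun p q z \<noteq> 0"
  by (simp add: rat_fun_def zero_set_def pole_set_def)

lemma translation_surface_chart:
  assumes "translation_surface X A" and "(U, \<phi>) \<in> A"
  shows "openin X U" and "inj_on \<phi> U"
proof -
  have hU: "homeomorphic_map (subtopology X U) (top_of_set (\<phi> ` U)) \<phi>"
    and oU: "openin X U"
    using assms unfolding translation_surface_def by auto
  show "openin X U" by (fact oU)
  show "inj_on \<phi> U"
    using homeomorphic_imp_injective_map[OF hU] openin_subset[OF oU]
    by (simp add: Int_absorb1)
qed

lemma homeomorphic_maps_inverse_in_domain:
  assumes "homeomorphic_maps (top_of_set \<Omega>) X F G" and "y \<in> topspace X"
  shows "G y \<in> \<Omega>" and "F (G y) = y"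
  using assms by (auto simp: homeomorphic_maps_def homeomorphic_map_def continuous_map_def)

lemma chart_inverse_has_field_derivative:
  fixes F :: "complex \<Rightarrow> 'a" and G :: "'a \<Rightarrow> complex" and \<phi> :: "'a \<Rightarrow> complex"
  assumes "open \<Omega>" and FG: "homeomorphic_maps (top_of_set \<Omega>) X F G"
    and oU: "openin X U" and inj: "inj_on \<phi> U"
    and dF: "\<And>y. y \<in> \<Omega> \<Longrightarrow> F y \<in> U \<Longrightarrow> ((\<phi> \<circ> F) has_field_derivative R y) (at y)"
    and "x \<in> U" and "R (G x) \<noteq> 0"
  shows "((\<lambda>w. G (inv_into U \<phi> w)) has_field_derivative inverse (R (G x))) (at (\<phi> x))"
proof -
  have cF: "continuous_map (top_of_set \<Omega>) X F"
    and GF: "\<And>z. z \<in> \<Omega> \<Longrightarrow> G (F z) = z"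
    using FG by (auto simp: homeomorphic_maps_def homeomorphic_map_def)
  define z where "z = G x"
  have xX: "x \<in> topspace X" using \<open>x \<in> U\<close> openin_subset[OF oU] by auto
  have zO: "z \<in> \<Omega>" and Fz: "F z = x"
    using homeomorphic_maps_inverse_in_domain[OF FG xX] by (simp_all add: z_def)
  define N where "N = {y \<in> \<Omega>. F y \<in> U}"
  have "openin (top_of_set \<Omega>) N"
    using openin_continuous_map_preimage[OF cF oU] by (simp add: N_def)
  then have "open N" using \<open>open \<Omega>\<close> openin_open_trans by blast
  have zN: "z \<in> N" using zO Fz \<open>x \<in> U\<close> by (simp add: N_def)
  have dN: "\<And>y. y \<in> N \<Longrightarrow> ((\<phi> \<circ> F) has_field_derivative R y) (at y)"
    using dF by (simp add: N_def)
  have "continuous_on N (\<phi> \<circ> F)"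
    using dN by (meson DERIV_isCont continuous_at_imp_continuous_on)
  moreover have "\<And>y. y \<in> N \<Longrightarrow> G (inv_into U \<phi> ((\<phi> \<circ> F) y)) = y"
    using inj GF by (simp add: N_def)
  ultimately have "((\<lambda>w. G (inv_into U \<phi> w)) has_field_derivative inverse (R z)) (at ((\<phi> \<circ> F) z))"
    using \<open>R (G x) \<noteq> 0\<close> unfolding z_def
    by (intro has_field_derivative_inverse_strong[OF dN[OF zN[unfolded z_def]] _ \<open>open N\<close> zN[unfolded z_def]])
  then show ?thesis using Fz z_def by simp
qed

lemma transition_of_common_primitive_has_field_derivative_one:
  fixes F1 :: "complex \<Rightarrow> 'a" and F2 :: "complex \<Rightarrow> 'b" and G :: "'a \<Rightarrow> complex"
  assumes "open \<Omega>" and FG: "homeomorphic_maps (top_of_set \<Omega>) X1 F1 G"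
    and "openin X1 U" and "inj_on \<phi> U"
    and "\<And>y. y \<in> \<Omega> \<Longrightarrow> F1 y \<in> U \<Longrightarrow> ((\<phi> \<circ> F1) has_field_derivative R y) (at y)"
    and dF2: "((\<eta> \<circ> F2) has_field_derivative R (G x)) (at (G x))"
    and "x \<in> U" and nz: "R (G x) \<noteq> 0"
  shows "((\<lambda>w. \<eta> (F2 (G (inv_into U \<phi> w)))) has_field_derivative 1) (at (\<phi> x))"
proof -
  let ?g = "\<lambda>w. G (inv_into U \<phi> w)"
  have Dg: "(?g has_field_derivative inverse (R (G x))) (at (\<phi> x))"
    by (rule chart_inverse_has_field_derivative[OF assms(1-5,7,8)])
  have "?g (\<phi> x) = G x" using \<open>x \<in> U\<close> \<open>inj_on \<phi> U\<close> by simp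
  then have "((\<eta> \<circ> F2) \<circ> ?g has_field_derivative R (G x) * inverse (R (G x))) (at (\<phi> x))"
    using DERIV_chain[OF _ Dg] dF2 by simp
  then show ?thesis using nz by (simp add: o_def)
qed

lemma surface_equal_if_common_primitive:
  fixes F1 :: "complex \<Rightarrow> 'a" and F2 :: "complex \<Rightarrow> 'b"
  assumes "open \<Omega>" and nz: "\<And>z. z \<in> \<Omega> \<Longrightarrow> R z \<noteq> 0"
    and X1: "translation_surface X1 A1"
    and hF1: "homeomorphic_map (top_of_set \<Omega>) X1 F1"
    and hF2: "homeomorphic_map (top_of_set \<Omega>) X2 F2"
    and d1: "\<forall>z \<in> \<Omega>. \<forall>(U, \<phi>) \<in> A1. F1 z \<in> U \<longrightarrow> ((\<phi> \<circ> F1) has_field_derivative R z) (at z)"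
    and d2: "\<forall>z \<in> \<Omega>. \<forall>(V, \<eta>) \<in> A2. F2 z \<in> V \<longrightarrow> ((\<eta> \<circ> F2) has_field_derivative R z) (at z)"
  shows "surface_equal X1 A1 X2 A2"
proof -
  obtain G where FG: "homeomorphic_maps (top_of_set \<Omega>) X1 F1 G"
    using hF1 homeomorphic_map_maps by blast
  have "homeomorphic_map X1 X2 (F2 \<circ> G)"
    using FG hF2 homeomorphic_map_compose homeomorphic_maps_map by blast
  moreover have "((\<lambda>w. \<eta> ((F2 \<circ> G) (inv_into U \<phi> w))) has_field_derivative 1) (at (\<phi> x))"
    if UA: "(U, \<phi>) \<in> A1" and VA: "(V, \<eta>) \<in> A2" and "x \<in> U" and "(F2 \<circ> G) x \<in> V"
    for U \<phi> V \<eta> x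
  proof -
    note chart = translation_surface_chart[OF X1 UA]
    have "x \<in> topspace X1" using \<open>x \<in> U\<close> openin_subset[OF chart(1)] by blast
    then have "G x \<in> \<Omega>" by (rule homeomorphic_maps_inverse_in_domain(1)[OF FG])
    then have dF2: "((\<eta> \<circ> F2) has_field_derivative R (G x)) (at (G x))"
      using d2 VA \<open>(F2 \<circ> G) x \<in> V\<close> by auto
    have dF1: "\<And>y. y \<in> \<Omega> \<Longrightarrow> F1 y \<in> U \<Longrightarrow> ((\<phi> \<circ> F1) has_field_derivative R y) (at y)"
      using d1 UA by auto
    show ?thesis
      using transition_of_common_primitive_has_field_derivative_one
        [OF \<open>open \<Omega>\<close> FG chart dF1 dF2 \<open>x \<in> U\<close> nz[OF \<open>G x \<in> \<Omega>\<close>]]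
      by simp
  qed
  ultimately show ?thesis unfolding surface_equal_def by blast
qed

theorem mainTheorem5:
  fixes p q :: "complex poly"
    and X1 :: "'a topology" and A1 :: "('a set \<times> ('a \<Rightarrow> complex)) set"
    and X2 :: "'b topology" and A2 :: "('b set \<times> ('b \<Rightarrow> complex)) set"
  assumes "q \<noteq> 0" and "coprime p q"
    and "translation_surface X1 A1" and "translation_surface X2 A2"
    and "associated_to p q X1 A1" and "associated_to p q X2 A2"
  shows "surface_equal X1 A1 X2 A2"
proof -
  define \<Omega> where "\<Omega> = - (zero_set p \<union> pole_set q)"
  obtain F1 where hF1: "homeomorphic_map (top_of_set \<Omega>) X1 F1"
    and d1: "\<forall>z \<in> \<Omega>. \<forall>(U, \<phi>) \<in> A1. F1 z \<in> U \<longrightarrow> ((\<phi> \<circ> F1) has_field_derivative rat_fun p q z) (at z)"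
    using assms(5) unfolding associated_to_def Let_def \<Omega>_def by blast
  obtain F2 where hF2: "homeomorphic_map (top_of_set \<Omega>) X2 F2"
    and d2: "\<forall>z \<in> \<Omega>. \<forall>(V, \<eta>) \<in> A2. F2 z \<in> V \<longrightarrow> ((\<eta> \<circ> F2) has_field_derivative rat_fun p q z) (at z)"
    using assms(6) unfolding associated_to_def Let_def \<Omega>_def by blast
  have "open \<Omega>" unfolding \<Omega>_def by (rule open_complement_zeros_poles)
  moreover have "\<And>z. z \<in> \<Omega> \<Longrightarrow> rat_fun p q z \<noteq> 0"
    unfolding \<Omega>_def by (rule rat_fun_nonzero_off_zeros_poles)
  ultimately show ?thesis
    using surface_equal_if_common_primitive[OF _ _ assms(3) hF1 hF2 d1 d2] by blast
qed

end
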